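(* Let $X$ be a Wixárika poset obtained from the one-element poset $\langle1\rangle$ by an expression (word) $w$ in which the binary operation $\mu$ occurs $m$ times and the unary operation $D$ occurs $d$ times. Then: (1) $Z_X$ has a unique expression $Z_X=\sum_{j=i}^{k}a_j\zeta_j$ with non-negative integers $a_j$ and $a_i,a_k\neq0$; (2) $i$ is the maximal number of elements of a chain in $X$; (3) $k=|X|$; (4) $k-i=d$, and $d$ equals the first Betti number of the Hasse diagram of $X$ (viewed as an undirected graph); (5) $m=i-2d-1$, and the tree of $w$ has $m+1$ leaves; (6) $\sum_{u=i}^{k}(-1)^{k-u}a_u=1$.
   Context: For $n\ge1$, $\langle n\rangle$ is the chain $1<\dots<n$; $\Omega(X,n)$ is the number of maps $f:X\to\langle n\rangle$ with $u<v\Rightarrow f(u)<f(v)$, and $Z_X(x)=\sum_{n\ge1}\Omega(X,n)x^n$. For $j\ge1$, $\zeta_j(x)=\frac{x^j}{(1-x)^{j+1}}$ (the strict order series of $\langle j\rangle$). The concatenation $\mu(Y,W)$ is the disjoint union of $Y$ and $W$ with their orders and every element of $Y$ below every element of $W$; $Y\sqcup W$ is the disjoint union with no relations. The handle operation is $D(X)=\mu(\langle1\rangle,\mu(\langle1\rangle\sqcup X,\langle1\rangle))$: $X$ together with a new minimum, a new maximum, and a new element strictly between them incomparable to all of $X$. Wixárika posets are the posets obtained from $\langle1\rangle$ by finitely many applications of $\mu$ and $D$. *)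

theory Defs
  imports Main "HOL-Library.FuncSet" "HOL-Computational_Algebra.Formal_Power_Series"
begin

datatype wword = One | Mu wword wword | Dh wword

fun count_mu :: "wword \<Rightarrow> nat" where
  "count_mu One = 0"
| "count_mu (Mu a b) = Suc (count_mu a + count_mu b)"
| "count_mu (Dh a) = count_mu a"

fun count_D :: "wword \<Rightarrow> nat" where
  "count_D One = 0"
| "count_D (Mu a b) = count_D a + count_D b"
| "count_D (Dh a) = Suc (count_D a)"

fun leaves :: "wword \<Rightarrow> nat" where
  "leaves One = 1"
| "leaves (Mu a b) = leaves a + leaves b"
| "leaves (Dh a) = leaves a"

text \<open>In Mu a b the elements of a are tagged 0, those of b tagged 1; in Dh a the
  elements of a are tagged 0, the new minimum is [2], the new maximum [3]
  and the new middle element [4].\<close>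
fun wcar :: "wword \<Rightarrow> nat list set" where
  "wcar One = {[]}"
| "wcar (Mu a b) = (Cons 0) ` wcar a \<union> (Cons 1) ` wcar b"
| "wcar (Dh a) = {[2], [3], [4]} \<union> (Cons 0) ` wcar a"

fun wless :: "wword \<Rightarrow> nat list \<Rightarrow> nat list \<Rightarrow> bool" where
  "wless One x y = False"
| "wless (Mu a b) x y =
     (x \<noteq> [] \<and> y \<noteq> [] \<and>
       ((hd x = 0 \<and> hd y = 0 \<and> wless a (tl x) (tl y)) \<or>
        (hd x = 1 \<and> hd y = 1 \<and> wless b (tl x) (tl y)) \<or>
        (hd x = 0 \<and> hd y = 1 \<and> tl x \<in> wcar a \<and> tl y \<in> wcar b)))"
| "wless (Dh a) x y =
     ((x = [2] \<and> y \<in> wcar (Dh a) - {[2]}) \<or>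
      (y = [3] \<and> x \<in> wcar (Dh a) - {[3]}) \<or>
      (x \<noteq> [] \<and> y \<noteq> [] \<and> hd x = 0 \<and> hd y = 0 \<and> wless a (tl x) (tl y)))"

definition Omega :: "'a set \<Rightarrow> ('a \<Rightarrow> 'a \<Rightarrow> bool) \<Rightarrow> nat \<Rightarrow> nat" where
  "Omega V lt n = card {f \<in> V \<rightarrow>\<^sub>E {1..n}. \<forall>u\<in>V. \<forall>v\<in>V. lt u v \<longrightarrow> f u < f v}"

definition Zser :: "'a set \<Rightarrow> ('a \<Rightarrow> 'a \<Rightarrow> bool) \<Rightarrow> real fps" where
  "Zser V lt = Abs_fps (\<lambda>n. if n = 0 then 0 else real (Omega V lt n))"

definition zeta :: "nat \<Rightarrow> real fps" where
  "zeta j = fps_X ^ j / (1 - fps_X) ^ (j + 1)"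

definition is_chain_in :: "'a set \<Rightarrow> ('a \<Rightarrow> 'a \<Rightarrow> bool) \<Rightarrow> 'a set \<Rightarrow> bool" where
  "is_chain_in V lt C \<longleftrightarrow> C \<subseteq> V \<and> (\<forall>x\<in>C. \<forall>y\<in>C. x \<noteq> y \<longrightarrow> lt x y \<or> lt y x)"

definition max_chain :: "'a set \<Rightarrow> ('a \<Rightarrow> 'a \<Rightarrow> bool) \<Rightarrow> nat" where
  "max_chain V lt = Max {card C | C. is_chain_in V lt C}"

definition hasse_edges :: "'a set \<Rightarrow> ('a \<Rightarrow> 'a \<Rightarrow> bool) \<Rightarrow> ('a \<times> 'a) set" where
  "hasse_edges V lt = {(u, v). u \<in> V \<and> v \<in> V \<and> lt u v \<and> \<not> (\<exists>z\<in>V. lt u z \<and> lt z v)}"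

definition components :: "'a set \<Rightarrow> ('a \<times> 'a) set \<Rightarrow> 'a set set" where
  "components V E = V // {(x, y). x \<in> V \<and> y \<in> V \<and> (x, y) \<in> (E \<union> E\<inverse>)\<^sup>*}"

definition betti1_hasse :: "'a set \<Rightarrow> ('a \<Rightarrow> 'a \<Rightarrow> bool) \<Rightarrow> int" where
  "betti1_hasse V lt = int (card (hasse_edges V lt)) - int (card V)
      + int (card (components V (hasse_edges V lt)))"

end

theory Submission
  imports Defs "HOL-Computational_Algebra.Polynomial"
begin

text \<open>
  The \<zeta>-coordinates of Z_X are recorded as the coefficients of a polynomial p. Since
  \<zeta>_j = G (X G)^j with G = 1/(1 - X), the expansion with coefficient polynomial p equals
  G p(X G). Hence the concatenation rule Z(\<mu>(Y, W)) = (1 - X) Z(Y) Z(W) turns into multiplication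
  of polynomials, and adjoining an isolated point, which multiplies \<Omega>(X, n) by n, turns into
  p \<mapsto> x ((1 + x) p)'. As D(X) is the concatenation of a point, X plus an isolated point, and a
  point, induction on the word shows that the coefficients are non-zero exactly between the height
  and the size of X and that p(-1) = (-1)^|X|, which is (6). The expansion is unique because the
  n-th coefficient of \<zeta>_j is n choose j. Finally, the Hasse diagram of a word is connected, \<mu> adds
  one edge and D adds three vertices and four edges, so its cycle rank is the number of handles.
\<close>

section \<open>The series \<zeta>_j and expansions in them\<close>

lemma zeta_altdef: "zeta j = fps_X ^ j * inverse (1 - fps_X) ^ Suc j"
  unfolding zeta_def fps_inverse_power[symmetric] by (simp add: fps_divide_unit del: power_Suc)

lemma zeta_nth: "fps_nth (zeta j) n = of_nat (n choose j)"
proof -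
  have "inverse ((1 - fps_X :: real fps) ^ Suc j) = Abs_fps (\<lambda>k. of_nat (j + k choose k))"
    using one_minus_const_fps_X_neg_power'[of "Suc j" "1::real"] by simp
  then show ?thesis
    by (auto simp: zeta_def fps_divide_unit fps_X_power_mult_nth binomial_eq_0 not_less
        binomial_symmetric[of j n])
qed

lemma map_poly_of_nat_mult:
  "map_poly of_nat (p * q) = (map_poly of_nat p * map_poly of_nat q :: 'a::comm_semiring_1 poly)"
  by (rule poly_eqI) (simp add: coeff_map_poly coeff_mult)

lemma map_poly_of_nat_pderiv:
  "map_poly of_nat (pderiv p) = (pderiv (map_poly of_nat p) :: 'a::{comm_semiring_1,semiring_no_zero_divisors} poly)"
  by (rule poly_eqI) (simp add: coeff_map_poly coeff_pderiv algebra_simps)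

lemma fps_deriv_poly:
  fixes p :: "'a::idom fps poly"
  assumes "\<And>n. fps_deriv (coeff p n) = 0"
  shows "fps_deriv (poly p f) = poly (pderiv p) f * fps_deriv f"
  using assms
proof (induction p)
  case (pCons a p)
  have "fps_deriv a = 0" "\<And>n. fps_deriv (coeff p n) = 0"
    using pCons.prems[of 0] pCons.prems[of "Suc _"] by simp_all
  with pCons.IH show ?case by (simp add: pderiv_pCons algebra_simps)
qed simp

definition zeta_sum :: "nat poly \<Rightarrow> real fps" where
  "zeta_sum p = (\<Sum>j\<le>degree p. of_nat (coeff p j) * zeta j)"

lemma zeta_sum_poly:
  "zeta_sum p = inverse (1 - fps_X) * poly (map_poly of_nat p) (fps_X * inverse (1 - fps_X))"
  unfolding zeta_sum_def zeta_altdef poly_altdef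
  by (simp add: degree_map_poly coeff_map_poly sum_distrib_left power_mult_distrib ac_simps)

lemma zeta_sum_X: "zeta_sum [:0, 1:] = zeta 1"
  by (simp add: zeta_sum_def)

lemma zeta_sum_mult: "zeta_sum (p * q) = (1 - fps_X) * zeta_sum p * zeta_sum q"
proof -
  define G :: "real fps" where "G = inverse (1 - fps_X)"
  define P Q where "P = poly (map_poly of_nat p) (fps_X * G)" and "Q = poly (map_poly of_nat q) (fps_X * G)"
  have "(1 - fps_X) * G = 1" unfolding G_def by (rule inverse_mult_eq_1') simp
  then have "(1 - fps_X) * (G * P) * (G * Q) = G * (P * Q)"
    by (metis mult.assoc mult.left_commute mult_1)
  then show ?thesis
    by (simp add: zeta_sum_poly map_poly_of_nat_mult flip: G_def P_def Q_def)
qed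

lemma zeta_sum_euler: "zeta_sum (pCons 0 (pderiv ([:1, 1:] * p))) = fps_X * fps_deriv (zeta_sum p)"
proof -
  define G :: "real fps" where "G = inverse (1 - fps_X)"
  define P :: "real fps poly" where "P = map_poly of_nat p"
  define A B where "A = poly P (fps_X * G)" and "B = poly (pderiv P) (fps_X * G)"
  have "(1 - fps_X) * G = 1" unfolding G_def by (rule inverse_mult_eq_1') simp
  then have G_eq: "1 + fps_X * G = G" by (simp add: algebra_simps)
  have dG: "fps_deriv G = G ^ 2" unfolding G_def by (subst fps_inverse_deriv) simp_all
  have "fps_deriv (fps_X * G) = G * (1 + fps_X * G)"
    by (simp add: dG power2_eq_square algebra_simps)
  then have dY: "fps_deriv (fps_X * G) = G ^ 2"
    by (simp add: G_eq power2_eq_square)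
  have "map_poly of_nat (pCons 0 (pderiv ([:1, 1:] * p))) = pCons 0 (pderiv ([:1, 1:] * P))"
    by (simp add: P_def map_poly_pCons map_poly_of_nat_mult map_poly_of_nat_pderiv
        del: mult_pCons_left)
  also have "pderiv ([:1, 1:] * P) = [:1, 1:] * pderiv P + P"
    by (simp add: pderiv_mult pderiv_pCons del: mult_pCons_left)
  finally have "zeta_sum (pCons 0 (pderiv ([:1, 1:] * p))) = G * (fps_X * G * ((1 + fps_X * G) * B + A))"
    by (simp add: zeta_sum_poly A_def B_def del: mult_pCons_left flip: G_def)
  also have "\<dots> = fps_X * (G * (B * G ^ 2) + G ^ 2 * A)"
    by (simp add: G_eq power2_eq_square algebra_simps)
  also have "\<dots> = fps_X * fps_deriv (zeta_sum p)"
  proof -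
    have "\<And>n. fps_deriv (coeff P n) = 0" by (simp add: P_def coeff_map_poly)
    then have "fps_deriv A = B * G ^ 2" unfolding A_def B_def by (simp only: fps_deriv_poly dY)
    then show ?thesis by (simp add: zeta_sum_poly dG flip: G_def P_def A_def)
  qed
  finally show ?thesis .
qed

lemma zeta_coeffs_unique:
  fixes c d :: "nat \<Rightarrow> real"
  assumes "(\<Sum>i\<le>N. fps_const (c i) * zeta i) = (\<Sum>i\<le>N. fps_const (d i) * zeta i)" "j \<le> N"
  shows "c j = d j"
proof -
  have eq: "(\<Sum>i\<le>N. c i * real (n choose i)) = (\<Sum>i\<le>N. d i * real (n choose i))" for n
    using arg_cong[OF assms(1), of "\<lambda>f. fps_nth f n"] by (simp add: fps_sum_nth zeta_nth)
  have split: "(\<Sum>i\<le>N. e i * real (n choose i)) = (\<Sum>i<n. e i * real (n choose i)) + e n"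
    if "n \<le> N" for e :: "nat \<Rightarrow> real" and n
  proof -
    have "(\<Sum>i\<le>N. e i * real (n choose i)) = (\<Sum>i\<le>n. e i * real (n choose i))"
      using that by (intro sum.mono_neutral_right) auto
    then show ?thesis by (simp add: lessThan_Suc_atMost[symmetric])
  qed
  show ?thesis
    using assms(2)
  proof (induction j rule: less_induct)
    case (less n)
    then have "(\<Sum>i<n. c i * real (n choose i)) = (\<Sum>i<n. d i * real (n choose i))"
      by (intro sum.cong) auto
    with eq[of n] split[OF less.prems, of c] split[OF less.prems, of d] show ?case
      by simp
  qed
qed

lemma zeta_expansion_unique:
  fixes a a' :: "nat \<Rightarrow> nat"
  assumes eq: "(\<Sum>j=i..k. of_nat (a j) * zeta j) = (\<Sum>j=i'..k'. of_nat (a' j) * zeta j)"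
    and "i \<le> k" "i' \<le> k'" "a i \<noteq> 0" "a k \<noteq> 0" "a' i' \<noteq> 0" "a' k' \<noteq> 0"
  shows "i' = i \<and> k' = k \<and> (\<forall>j\<in>{i..k}. a' j = a j)"
proof -
  define N where "N = max k k'"
  define ext :: "nat \<Rightarrow> nat \<Rightarrow> (nat \<Rightarrow> nat) \<Rightarrow> nat \<Rightarrow> real"
    where "ext l m b j = (if j \<in> {l..m} then real (b j) else 0)" for l m b j
  have extend: "(\<Sum>j=l..m. of_nat (b j) * zeta j) = (\<Sum>j\<le>N. fps_const (ext l m b j) * zeta j)"
    if "m \<le> N" for l m b
    using that by (intro sum.mono_neutral_cong_left) (auto simp: ext_def fps_of_nat)
  have same: "ext i k a j = ext i' k' a' j" for j
  proof (cases "j \<le> N")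
    case True
    with eq show ?thesis
      by (intro zeta_coeffs_unique[where N = N]) (simp_all add: extend N_def)
  next
    case False
    then show ?thesis by (auto simp: ext_def N_def)
  qed
  have nz: "ext i k a j \<noteq> 0 \<longleftrightarrow> j \<in> {i..k} \<and> a j \<noteq> 0"
    and nz': "ext i' k' a' j \<noteq> 0 \<longleftrightarrow> j \<in> {i'..k'} \<and> a' j \<noteq> 0" for j
    by (auto simp: ext_def)
  have "i' \<le> i" "i \<le> i'" "k \<le> k'" "k' \<le> k"
    using nz[of i] nz[of k] nz[of i'] nz[of k'] nz'[of i] nz'[of k] nz'[of i'] nz'[of k']
      same[of i] same[of k] same[of i'] same[of k'] assms(2-)
    by auto
  then have "i' = i" "k' = k" by simp_all
  moreover have "a' j = a j" if "j \<in> {i..k}" for j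
    using same[of j] that \<open>i' = i\<close> \<open>k' = k\<close> by (simp add: ext_def)
  ultimately show ?thesis by blast
qed

lemma sum_alternating_coeff:
  fixes p :: "nat poly"
  shows "(\<Sum>u\<le>degree p. (-1::int) ^ (degree p - u) * int (coeff p u))
    = (-1) ^ degree p * poly (map_poly of_nat p) (-1)"
proof -
  have "(-1::int) ^ (degree p - u) = (-1) ^ degree p * (-1) ^ u" if "u \<le> degree p" for u
    using that by (simp add: minus_one_power_iff)
  then show ?thesis
    by (simp add: poly_altdef degree_map_poly coeff_map_poly sum_distrib_left ac_simps)
qed

section \<open>Strict order series of concatenations and isolated points\<close>

definition strict_maps :: "'a set \<Rightarrow> ('a \<Rightarrow> 'a \<Rightarrow> bool) \<Rightarrow> nat set \<Rightarrow> ('a \<Rightarrow> nat) set" where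
  "strict_maps V lt S = {f \<in> V \<rightarrow>\<^sub>E S. \<forall>u\<in>V. \<forall>v\<in>V. lt u v \<longrightarrow> f u < f v}"

lemma Omega_eq_card_strict_maps: "Omega V lt n = card (strict_maps V lt {1..n})"
  by (simp add: Omega_def strict_maps_def)

lemma finite_strict_maps: "finite V \<Longrightarrow> finite S \<Longrightarrow> finite (strict_maps V lt S)"
  unfolding strict_maps_def by (rule finite_subset[of _ "V \<rightarrow>\<^sub>E S"]) (auto intro: finite_PiE)

lemma Omega_0: "V \<noteq> {} \<Longrightarrow> Omega V lt 0 = 0"
  by (auto simp: Omega_def PiE_eq_empty_iff)

lemma Omega_mono: "finite V \<Longrightarrow> m \<le> n \<Longrightarrow> Omega V lt m \<le> Omega V lt n"
  unfolding Omega_eq_card_strict_maps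
  by (intro card_mono finite_strict_maps) (auto simp: strict_maps_def PiE_def Pi_def)

lemma Omega_cong:
  assumes "\<And>u v. u \<in> V \<Longrightarrow> v \<in> V \<Longrightarrow> lt u v = lt' u v"
  shows "Omega V lt n = Omega V lt' n"
proof -
  have "strict_maps V lt {1..n} = strict_maps V lt' {1..n}"
    using assms by (auto simp: strict_maps_def)
  then show ?thesis by (simp add: Omega_eq_card_strict_maps)
qed

lemma Omega_image:
  assumes "inj_on e V"
  shows "Omega (e ` V) lt n = Omega V (\<lambda>u v. lt (e u) (e v)) n"
proof -
  let ?e' = "the_inv_into V e"
  have "bij_betw (\<lambda>f. restrict (f \<circ> e) V)
      (strict_maps (e ` V) lt {1..n}) (strict_maps V (\<lambda>u v. lt (e u) (e v)) {1..n})"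
    by (rule bij_betw_byWitness[where f'="\<lambda>g. restrict (g \<circ> ?e') (e ` V)"])
      (auto simp: strict_maps_def fun_eq_iff the_inv_into_f_f assms PiE_def extensional_def)
  then show ?thesis by (simp add: Omega_eq_card_strict_maps bij_betw_same_card)
qed

lemma card_strict_maps_above:
  assumes "t \<le> n"
  shows "card {h \<in> strict_maps V lt {1..n}. \<forall>y\<in>V. t < h y} = Omega V lt (n - t)"
proof -
  have shift_less_iff: "a - t < b - t \<longleftrightarrow> a < b" if "t < a" "t < b" for a b :: nat
    using that by linarith
  have "bij_betw (\<lambda>h. restrict (\<lambda>y. h y - t) V)
      {h \<in> strict_maps V lt {1..n}. \<forall>y\<in>V. t < h y} (strict_maps V lt {1..n - t})"
    by (rule bij_betw_byWitness[where f'="\<lambda>g. restrict (\<lambda>y. g y + t) V"])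
      (use assms in \<open>auto simp: strict_maps_def fun_eq_iff PiE_def extensional_def Pi_def
        shift_less_iff\<close>)
  then show ?thesis by (simp add: Omega_eq_card_strict_maps bij_betw_same_card)
qed

lemma card_strict_maps_with_max:
  assumes "finite V" "V \<noteq> {}" "t \<le> n"
  shows "card {g \<in> strict_maps V lt {1..n}. Max (g ` V) = t} = Omega V lt t - Omega V lt (t - 1)"
proof -
  define top :: "('a \<Rightarrow> nat) \<Rightarrow> nat" where "top g = Max (g ` V)" for g
  have top_le: "top g \<le> k \<longleftrightarrow> (\<forall>x\<in>V. g x \<le> k)" for g k
    using assms by (simp add: top_def)
  have below: "g \<in> strict_maps V lt {1..k} \<longleftrightarrow> g \<in> strict_maps V lt {1..n} \<and> top g \<le> k"
    if "k \<le> n" for g k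
    using that by (auto simp: top_le strict_maps_def PiE_def Pi_def)
  have top_pos: "0 < top g" if "g \<in> strict_maps V lt {1..n}" for g
  proof -
    obtain x where "x \<in> V" using assms by blast
    with that have "0 < g x" by (auto simp: strict_maps_def PiE_iff)
    moreover have "g x \<le> top g"
      unfolding top_def using assms \<open>x \<in> V\<close> by (intro Max_ge) auto
    ultimately show ?thesis by linarith
  qed
  show ?thesis
  proof (cases "t = 0")
    case True
    then have "{g \<in> strict_maps V lt {1..n}. top g = t} = {}"
      using top_pos by fastforce
    then show ?thesis using True unfolding top_def by (metis card.empty diff_self_eq_0 diff_0_eq_0)
  next
    case False
    then have "{g \<in> strict_maps V lt {1..n}. top g = t}
        = strict_maps V lt {1..t} - strict_maps V lt {1..t - 1}"
      using below[of t] below[of "t - 1"] assms by auto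
    moreover have "strict_maps V lt {1..t - 1} \<subseteq> strict_maps V lt {1..t}"
      using below[of t] below[of "t - 1"] assms by auto
    ultimately show ?thesis
      using assms by (simp add: card_Diff_subset finite_strict_maps Omega_eq_card_strict_maps top_def)
  qed
qed

lemma strict_maps_concat_bij:
  assumes "V1 \<inter> V2 = {}"
    and "\<And>u v. u \<in> V1 \<Longrightarrow> v \<in> V2 \<Longrightarrow> lt u v"
    and "\<And>u v. u \<in> V2 \<Longrightarrow> v \<in> V1 \<Longrightarrow> \<not> lt u v"
  shows "bij_betw (\<lambda>f. (restrict f V1, restrict f V2)) (strict_maps (V1 \<union> V2) lt S)
    (SIGMA g:strict_maps V1 lt S. {h \<in> strict_maps V2 lt S. \<forall>y\<in>V2. \<forall>x\<in>V1. g x < h y})"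
  by (rule bij_betw_byWitness[where f'="\<lambda>(g, h) x. if x \<in> V1 then g x else h x"])
    (use assms in \<open>auto simp: strict_maps_def fun_eq_iff PiE_def extensional_def Pi_def\<close>)

lemma Omega_concat:
  assumes "finite V1" "finite V2" "V1 \<noteq> {}" "V1 \<inter> V2 = {}"
    and "\<And>u v. u \<in> V1 \<Longrightarrow> v \<in> V2 \<Longrightarrow> lt u v"
    and "\<And>u v. u \<in> V2 \<Longrightarrow> v \<in> V1 \<Longrightarrow> \<not> lt u v"
  shows "Omega (V1 \<union> V2) lt n
    = (\<Sum>t\<le>n. (Omega V1 lt t - Omega V1 lt (t - 1)) * Omega V2 lt (n - t))"
proof -
  let ?F = "\<lambda>V. strict_maps V lt {1..n}"
  define top :: "('a \<Rightarrow> nat) \<Rightarrow> nat" where "top g = Max (g ` V1)" for g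
  have top_less: "top g < k \<longleftrightarrow> (\<forall>x\<in>V1. g x < k)" for g k
    using assms by (simp add: top_def)
  have top_le: "top g \<le> n" if "g \<in> ?F V1" for g
    using that assms by (auto simp: top_def strict_maps_def PiE_iff)
  have "Omega (V1 \<union> V2) lt n
      = card (SIGMA g:?F V1. {h \<in> ?F V2. \<forall>y\<in>V2. \<forall>x\<in>V1. g x < h y})"
    unfolding Omega_eq_card_strict_maps by (rule bij_betw_same_card[OF strict_maps_concat_bij]) fact+
  also have "\<dots> = (\<Sum>g\<in>?F V1. card {h \<in> ?F V2. \<forall>y\<in>V2. top g < h y})"
    using assms by (subst card_SigmaI) (auto simp: finite_strict_maps top_less intro!: sum.cong)
  also have "\<dots> = (\<Sum>g\<in>?F V1. Omega V2 lt (n - top g))"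
    by (intro sum.cong refl card_strict_maps_above top_le)
  also have "\<dots> = (\<Sum>t\<le>n. \<Sum>g\<in>{g \<in> ?F V1. top g = t}. Omega V2 lt (n - top g))"
    by (rule sum.group[symmetric]) (use top_le assms in \<open>auto simp: finite_strict_maps\<close>)
  also have "\<dots> = (\<Sum>t\<le>n. card {g \<in> ?F V1. top g = t} * Omega V2 lt (n - t))"
    by simp
  also have "\<dots> = (\<Sum>t\<le>n. (Omega V1 lt t - Omega V1 lt (t - 1)) * Omega V2 lt (n - t))"
    using card_strict_maps_with_max[OF assms(1,3)] by (simp add: top_def)
  finally show ?thesis .
qed

lemma Omega_insert_isolated:
  assumes "p \<notin> V" "\<not> lt p p" "\<And>v. v \<in> V \<Longrightarrow> \<not> lt p v \<and> \<not> lt v p"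
  shows "Omega (insert p V) lt n = n * Omega V lt n"
proof -
  have "bij_betw (\<lambda>f. (f p, restrict f V)) (strict_maps (insert p V) lt {1..n})
      ({1..n} \<times> strict_maps V lt {1..n})"
    by (rule bij_betw_byWitness[where f'="\<lambda>(c, g). g(p := c)"])
      (use assms in \<open>auto simp: strict_maps_def fun_eq_iff PiE_def extensional_def Pi_def\<close>)
  then show ?thesis by (simp add: Omega_eq_card_strict_maps bij_betw_same_card card_cartesian_product)
qed

lemma Zser_nth: "V \<noteq> {} \<Longrightarrow> fps_nth (Zser V lt) n = real (Omega V lt n)"
  by (simp add: Zser_def Omega_0)

lemma Zser_cong:
  assumes "\<And>u v. u \<in> V \<Longrightarrow> v \<in> V \<Longrightarrow> lt u v = lt' u v"
  shows "Zser V lt = Zser V lt'"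
proof -
  have "Omega V lt n = Omega V lt' n" for n
    using assms by (rule Omega_cong)
  then show ?thesis unfolding Zser_def by presburger
qed

lemma Zser_image:
  assumes "inj_on e V"
  shows "Zser (e ` V) lt = Zser V (\<lambda>u v. lt (e u) (e v))"
  unfolding Zser_def by (simp only: Omega_image[OF assms])

lemma Zser_concat:
  assumes "finite V1" "finite V2" "V1 \<noteq> {}" "V2 \<noteq> {}" "V1 \<inter> V2 = {}"
    and "\<And>u v. u \<in> V1 \<Longrightarrow> v \<in> V2 \<Longrightarrow> lt u v"
    and "\<And>u v. u \<in> V2 \<Longrightarrow> v \<in> V1 \<Longrightarrow> \<not> lt u v"
  shows "Zser (V1 \<union> V2) lt = (1 - fps_X) * Zser V1 lt * Zser V2 lt"
proof (rule fps_ext)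
  fix n
  have "fps_nth ((1 - fps_X) * Zser V1 lt) t = real (Omega V1 lt t - Omega V1 lt (t - 1))" for t
    using assms(1,3) by (cases t) (simp_all add: Zser_nth algebra_simps Omega_mono Omega_0 of_nat_diff)
  then have "fps_nth ((1 - fps_X) * Zser V1 lt * Zser V2 lt) n
      = real (\<Sum>t\<le>n. (Omega V1 lt t - Omega V1 lt (t - 1)) * Omega V2 lt (n - t))"
    using assms(4) by (simp add: fps_mult_nth[of "(1 - fps_X) * Zser V1 lt"] Zser_nth atLeast0AtMost)
  also have "\<dots> = fps_nth (Zser (V1 \<union> V2) lt) n"
    using assms by (simp add: Omega_concat Zser_nth del: of_nat_sum)
  finally show "fps_nth (Zser (V1 \<union> V2) lt) n = fps_nth ((1 - fps_X) * Zser V1 lt * Zser V2 lt) n" ..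
qed

lemma Zser_insert_isolated:
  assumes "p \<notin> V" "\<not> lt p p" "\<And>v. v \<in> V \<Longrightarrow> \<not> lt p v \<and> \<not> lt v p"
  shows "Zser (insert p V) lt = fps_X * fps_deriv (Zser V lt)"
  by (rule fps_ext) (simp add: Zser_def Omega_insert_isolated[of p V lt, OF assms])

lemma Zser_singleton: "\<not> lt p p \<Longrightarrow> Zser {p} lt = zeta 1"
proof -
  assume "\<not> lt p p"
  then have "strict_maps {p} lt {1..n} = {p} \<rightarrow>\<^sub>E {1..n}" for n
    by (auto simp: strict_maps_def)
  then show ?thesis
    by (intro fps_ext) (simp add: Zser_nth Omega_eq_card_strict_maps card_PiE zeta_nth)
qed

section \<open>Wixarika words\<close>

fun height :: "wword \<Rightarrow> nat" where
  "height One = 1"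
| "height (Mu a b) = height a + height b"
| "height (Dh a) = height a + 2"

fun zeta_poly :: "wword \<Rightarrow> nat poly" where
  "zeta_poly One = [:0, 1:]"
| "zeta_poly (Mu a b) = zeta_poly a * zeta_poly b"
| "zeta_poly (Dh a) = [:0, 1:] * pCons 0 (pderiv ([:1, 1:] * zeta_poly a)) * [:0, 1:]"

lemma height_eq: "height w = count_mu w + 2 * count_D w + 1"
  by (induction w) auto

lemma height_pos: "0 < height w"
  by (induction w) auto

lemma leaves_eq: "leaves w = count_mu w + 1"
  by (induction w) auto

lemma finite_wcar: "finite (wcar w)"
  by (induction w) auto

lemma wcar_nonempty: "wcar w \<noteq> {}"
  by (induction w) auto

lemma card_wcar: "card (wcar w) = height w + count_D w"
proof (induction w)
  case (Mu a b)
  have "card (wcar (Mu a b)) = card (Cons 0 ` wcar a) + card (Cons 1 ` wcar b)"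
    by (simp only: wcar.simps) (rule card_Un_disjoint, auto simp: finite_wcar)
  with Mu show ?case by (simp add: card_image)
next
  case (Dh a)
  have "card (wcar (Dh a)) = card {[2::nat], [3], [4]} + card (Cons 0 ` wcar a)"
    by (simp only: wcar.simps) (rule card_Un_disjoint, auto simp: finite_wcar)
  with Dh show ?case by (simp add: card_image)
qed simp

lemma card_wcar_Mu: "card (wcar (Mu a b)) = card (wcar a) + card (wcar b)"
  by (simp only: card_wcar) simp

lemma card_wcar_Dh: "card (wcar (Dh a)) = card (wcar a) + 3"
  by (simp only: card_wcar) simp

lemma wless_in_wcar: "wless w x y \<Longrightarrow> x \<in> wcar w \<and> y \<in> wcar w"
proof (induction w arbitrary: x y)
  case (Mu a b)
  then show ?case by (cases x; cases y) (auto simp: image_iff)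
next
  case (Dh a)
  then show ?case by (cases x; cases y) (auto simp: image_iff)
qed simp

lemma wless_irrefl: "\<not> wless w x x"
  by (induction w arbitrary: x) auto

lemma wless_asym: "wless w x y \<Longrightarrow> \<not> wless w y x"
  by (induction w arbitrary: x y) auto

lemma Zser_Cons_embedding:
  assumes "\<And>x y. x \<in> A \<Longrightarrow> y \<in> A \<Longrightarrow> lt (k # x) (k # y) = lt' x y"
  shows "Zser (Cons k ` A) lt = Zser A lt'"
proof -
  have "Zser (Cons k ` A) lt = Zser A (\<lambda>x y. lt (k # x) (k # y))"
    by (rule Zser_image) simp
  also have "\<dots> = Zser A lt'"
    by (rule Zser_cong) (rule assms)
  finally show ?thesis .
qed

theorem Zser_wcar: "Zser (wcar w) (wless w) = zeta_sum (zeta_poly w)"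
proof (induction w)
  case One
  show ?case unfolding wcar.simps zeta_poly.simps zeta_sum_X by (rule Zser_singleton) simp
next
  case (Mu a b)
  have "Zser (wcar (Mu a b)) (wless (Mu a b))
      = (1 - fps_X) * Zser (Cons 0 ` wcar a) (wless (Mu a b)) * Zser (Cons 1 ` wcar b) (wless (Mu a b))"
    unfolding wcar.simps by (rule Zser_concat) (auto simp: finite_wcar wcar_nonempty)
  also have "Zser (Cons 0 ` wcar a) (wless (Mu a b)) = Zser (wcar a) (wless a)"
    by (rule Zser_Cons_embedding) simp
  also have "Zser (Cons 1 ` wcar b) (wless (Mu a b)) = Zser (wcar b) (wless b)"
    by (rule Zser_Cons_embedding) simp
  finally show ?case by (simp only: Mu.IH zeta_poly.simps zeta_sum_mult)
next
  case (Dh a)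
  let ?lt = "wless (Dh a)" and ?N = "insert [4] (Cons 0 ` wcar a)"
    and ?q = "pCons 0 (pderiv ([:1, 1:] * zeta_poly a))"
  have "Zser ?N ?lt = fps_X * fps_deriv (Zser (Cons 0 ` wcar a) ?lt)"
    by (rule Zser_insert_isolated) auto
  also have "Zser (Cons 0 ` wcar a) ?lt = Zser (wcar a) (wless a)"
    by (rule Zser_Cons_embedding) simp
  also have "fps_X * fps_deriv (Zser (wcar a) (wless a)) = zeta_sum ?q"
    by (simp only: Dh.IH zeta_sum_euler)
  finally have N: "Zser ?N ?lt = zeta_sum ?q" .
  have split: "wcar (Dh a) = {[2]} \<union> (?N \<union> {[3]})" by auto
  have "Zser (wcar (Dh a)) ?lt = (1 - fps_X) * Zser {[2]} ?lt * Zser (?N \<union> {[3]}) ?lt"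
    unfolding split by (rule Zser_concat) (auto simp: finite_wcar)
  also have "Zser (?N \<union> {[3]}) ?lt = (1 - fps_X) * Zser ?N ?lt * Zser {[3]} ?lt"
    by (rule Zser_concat) (auto simp: finite_wcar)
  also have "Zser {[2]} ?lt = zeta 1"
    by (rule Zser_singleton) simp
  also have "Zser {[3]} ?lt = zeta 1"
    by (rule Zser_singleton) simp
  also note N
  also have "(1 - fps_X) * zeta 1 * ((1 - fps_X) * zeta_sum ?q * zeta 1) = zeta_sum ([:0, 1:] * (?q * [:0, 1:]))"
    by (simp only: zeta_sum_mult zeta_sum_X)
  finally show ?case
    by (simp only: zeta_poly.simps mult.assoc)
qed

lemma coeff_zeta_poly_Dh:
  "coeff (zeta_poly (Dh a)) 0 = 0"
  "coeff (zeta_poly (Dh a)) (Suc 0) = 0"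
  "coeff (zeta_poly (Dh a)) (Suc (Suc j)) = j * (coeff (zeta_poly a) j + coeff (zeta_poly a) (j - 1))"
  by (simp_all add: coeff_pderiv coeff_pCons split: nat.split)

lemma ex_split_between_iff:
  fixes l1 u1 l2 u2 j :: nat
  assumes "l1 \<le> u1" "l2 \<le> u2"
  shows "(\<exists>i\<le>j. l1 \<le> i \<and> i \<le> u1 \<and> l2 \<le> j - i \<and> j - i \<le> u2) \<longleftrightarrow> l1 + l2 \<le> j \<and> j \<le> u1 + u2"
proof
  assume "l1 + l2 \<le> j \<and> j \<le> u1 + u2"
  with assms show "\<exists>i\<le>j. l1 \<le> i \<and> i \<le> u1 \<and> l2 \<le> j - i \<and> j - i \<le> u2"
    by (intro exI[of _ "max l1 (j - u2)"]) auto
qed auto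

lemma coeff_zeta_poly_nonzero_iff: "coeff (zeta_poly w) j \<noteq> 0 \<longleftrightarrow> height w \<le> j \<and> j \<le> card (wcar w)"
proof (induction w arbitrary: j)
  case One
  then show ?case by (auto simp: coeff_pCons split: nat.split)
next
  case (Mu a b)
  have "coeff (zeta_poly (Mu a b)) j \<noteq> 0 \<longleftrightarrow> (\<exists>i\<le>j. coeff (zeta_poly a) i \<noteq> 0 \<and> coeff (zeta_poly b) (j - i) \<noteq> 0)"
    by (auto simp: coeff_mult)
  also have "\<dots> \<longleftrightarrow> height (Mu a b) \<le> j \<and> j \<le> card (wcar (Mu a b))"
    unfolding Mu.IH card_wcar by (simp add: ex_split_between_iff algebra_simps)
  finally show ?case .
next
  case (Dh a)
  have bounds: "0 < height a" "height a \<le> card (wcar a)"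
    by (simp_all add: card_wcar height_pos)
  show ?case
  proof (cases "j < 2")
    case True
    then show ?thesis by (auto simp: coeff_zeta_poly_Dh less_2_cases_iff)
  next
    case False
    then obtain i where j: "j = Suc (Suc i)"
      by (metis add_2_eq_Suc le_add_diff_inverse not_less)
    show ?thesis
      unfolding j coeff_zeta_poly_Dh card_wcar_Dh height.simps using Dh.IH[of i] Dh.IH[of "i - 1"] bounds
      by auto
  qed
qed

lemma coeff_zeta_poly_eq_0_iff: "coeff (zeta_poly w) j = 0 \<longleftrightarrow> j < height w \<or> card (wcar w) < j"
  using coeff_zeta_poly_nonzero_iff[of w j] by auto

lemma degree_zeta_poly: "degree (zeta_poly w) = card (wcar w)"
proof (rule antisym)
  show "degree (zeta_poly w) \<le> card (wcar w)"
    by (rule degree_le) (meson coeff_zeta_poly_nonzero_iff not_le)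
  have "height w \<le> card (wcar w)"
    by (simp add: card_wcar)
  then show "card (wcar w) \<le> degree (zeta_poly w)"
    by (metis le_degree coeff_zeta_poly_nonzero_iff order_refl)
qed

lemma poly_zeta_poly_minus_one: "poly (map_poly of_nat (zeta_poly w)) (-1 :: int) = (-1) ^ card (wcar w)"
proof (induction w)
  case One
  then show ?case by (simp add: map_poly_pCons)
next
  case (Mu a b)
  then show ?case
    by (simp add: map_poly_of_nat_mult card_wcar_Mu power_add del: wcar.simps)
next
  case (Dh a)
  let ?P = "map_poly of_nat (zeta_poly a) :: int poly"
  have map: "map_poly of_nat (zeta_poly (Dh a)) = [:0, 1:] * pCons 0 (pderiv ([:1, 1:] * ?P)) * [:0, 1:]"
    by (simp only: zeta_poly.simps map_poly_of_nat_mult map_poly_pCons map_poly_of_nat_pderiv) simp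
  have "pderiv ([:1, 1:] * ?P) = [:1, 1:] * pderiv ?P + ?P"
    by (simp add: pderiv_mult pderiv_pCons del: mult_pCons_left)
  then show ?case
    unfolding map card_wcar_Dh using Dh.IH by (simp add: power_add del: mult_pCons_left mult_pCons_right)
qed

section \<open>Extremal elements and chains\<close>

fun wbot :: "wword \<Rightarrow> nat list" where
  "wbot One = []" | "wbot (Mu a b) = 0 # wbot a" | "wbot (Dh a) = [2]"

fun wtop :: "wword \<Rightarrow> nat list" where
  "wtop One = []" | "wtop (Mu a b) = 1 # wtop b" | "wtop (Dh a) = [3]"

lemma wbot_in_wcar: "wbot w \<in> wcar w"
  by (induction w) auto

lemma wtop_in_wcar: "wtop w \<in> wcar w"
  by (induction w) auto

lemma wbot_least: "x \<in> wcar w \<Longrightarrow> x \<noteq> wbot w \<Longrightarrow> wless w (wbot w) x"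
  by (induction w arbitrary: x) (auto simp: wbot_in_wcar)

lemma wtop_greatest: "x \<in> wcar w \<Longrightarrow> x \<noteq> wtop w \<Longrightarrow> wless w x (wtop w)"
  by (induction w arbitrary: x) (auto simp: wtop_in_wcar)

lemma not_wless_wbot: "\<not> wless w x (wbot w)"
  using wbot_least wless_asym wless_in_wcar wless_irrefl by metis

lemma not_wtop_wless: "\<not> wless w (wtop w) x"
  using wtop_greatest wless_asym wless_in_wcar wless_irrefl by metis

lemma finite_chain: "finite V \<Longrightarrow> is_chain_in V lt C \<Longrightarrow> finite C"
  unfolding is_chain_in_def using finite_subset by blast

lemma is_chain_in_Cons_part:
  assumes "is_chain_in V lt C"
    and "\<And>x y. x \<in> A \<Longrightarrow> y \<in> A \<Longrightarrow> lt (k # x) (k # y) \<Longrightarrow> lt' x y"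
  shows "is_chain_in A lt' (tl ` (C \<inter> Cons k ` A))"
  using assms unfolding is_chain_in_def by (auto 4 4)

lemma card_Cons_part: "card (tl ` (C \<inter> Cons k ` A)) = card (C \<inter> Cons k ` A)"
  by (rule card_image) (auto simp: inj_on_def)

lemma card_chain_le_height: "is_chain_in (wcar w) (wless w) C \<Longrightarrow> card C \<le> height w"
proof (induction w arbitrary: C)
  case One
  then have "C \<subseteq> {[]}" by (simp add: is_chain_in_def)
  then show ?case using card_mono[of "{[]}" C] by simp
next
  case (Mu a b)
  let ?C0 = "C \<inter> Cons 0 ` wcar a" and ?C1 = "C \<inter> Cons 1 ` wcar b"
  have "is_chain_in (wcar a) (wless a) (tl ` ?C0)" "is_chain_in (wcar b) (wless b) (tl ` ?C1)"
    by (rule is_chain_in_Cons_part[OF Mu.prems]; simp)+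
  then have "card ?C0 \<le> height a" "card ?C1 \<le> height b"
    using Mu.IH card_Cons_part by metis+
  moreover have "C = ?C0 \<union> ?C1"
    using Mu.prems by (auto simp: is_chain_in_def)
  then have "card C \<le> card ?C0 + card ?C1"
    by (metis card_Un_le)
  ultimately show ?case by simp
next
  case (Dh a)
  let ?C0 = "C \<inter> Cons 0 ` wcar a"
  show ?case
  proof (cases "[4] \<in> C")
    case True
    \<comment> \<open>the middle element [4] of the handle is comparable only with [2] and [3]\<close>
    have "C \<subseteq> {[2], [3], [4]}"
    proof
      fix z assume "z \<in> C"
      then have "z \<in> wcar (Dh a)" "z = [4] \<or> wless (Dh a) [4] z \<or> wless (Dh a) z [4]"
        using Dh.prems True unfolding is_chain_in_def by blast+
      then show "z \<in> {[2], [3], [4]}" by auto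
    qed
    then have "card C \<le> 3"
      using card_mono[of "{[2], [3], [4]}" C] by simp
    then show ?thesis using height_pos[of a] by simp
  next
    case False
    have "is_chain_in (wcar a) (wless a) (tl ` ?C0)"
      by (rule is_chain_in_Cons_part[OF Dh.prems]) simp
    then have "card ?C0 \<le> height a"
      using Dh.IH card_Cons_part by metis
    have "C \<subseteq> {[2], [3]} \<union> ?C0"
      using Dh.prems False by (auto simp: is_chain_in_def)
    then have "card C \<le> card ({[2], [3]} \<union> ?C0)"
      by (rule card_mono[rotated]) (simp add: finite_wcar)
    also have "\<dots> \<le> card {[2::nat], [3]} + card ?C0"
      by (rule card_Un_le)
    finally show ?thesis
      using \<open>card ?C0 \<le> height a\<close> by simp
  qed
qed

lemma chain_of_height: "\<exists>C. is_chain_in (wcar w) (wless w) C \<and> card C = height w"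
proof (induction w)
  case One
  show ?case by (rule exI[of _ "{[]}"]) (simp add: is_chain_in_def)
next
  case (Mu a b)
  obtain A B where A: "is_chain_in (wcar a) (wless a) A" "card A = height a"
    and B: "is_chain_in (wcar b) (wless b) B" "card B = height b"
    using Mu.IH by blast
  let ?C = "Cons 0 ` A \<union> Cons 1 ` B"
  have "is_chain_in (wcar (Mu a b)) (wless (Mu a b)) ?C"
    unfolding is_chain_in_def
  proof (intro conjI ballI impI)
    show "?C \<subseteq> wcar (Mu a b)"
      using A(1) B(1) by (auto simp: is_chain_in_def)
  next
    fix x y assume "x \<in> ?C" "y \<in> ?C" "x \<noteq> y"
    then consider
        x' y' where "x = 0 # x'" "y = 0 # y'" "x' \<in> A" "y' \<in> A" "x' \<noteq> y'"
      | x' y' where "x = 0 # x'" "y = 1 # y'" "x' \<in> A" "y' \<in> B"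
      | x' y' where "x = 1 # x'" "y = 0 # y'" "x' \<in> B" "y' \<in> A"
      | x' y' where "x = 1 # x'" "y = 1 # y'" "x' \<in> B" "y' \<in> B" "x' \<noteq> y'"
      by blast
    then show "wless (Mu a b) x y \<or> wless (Mu a b) y x"
      by cases (use A(1) B(1) in \<open>auto simp: is_chain_in_def subset_iff\<close>)
  qed
  moreover have "card ?C = height (Mu a b)"
    using A B finite_chain[OF finite_wcar A(1)] finite_chain[OF finite_wcar B(1)]
    by (subst card_Un_disjoint) (auto simp: card_image)
  ultimately show ?case by blast
next
  case (Dh a)
  obtain A where A: "is_chain_in (wcar a) (wless a) A" "card A = height a"
    using Dh.IH by blast
  let ?C = "{[2], [3]} \<union> Cons 0 ` A"
  have sub: "?C \<subseteq> wcar (Dh a)"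
    using A(1) by (auto simp: is_chain_in_def)
  have "is_chain_in (wcar (Dh a)) (wless (Dh a)) ?C"
    unfolding is_chain_in_def
  proof (intro conjI ballI impI sub)
    fix x y assume xy: "x \<in> ?C" "y \<in> ?C" "x \<noteq> y"
    then have "x \<in> wcar (Dh a)" "y \<in> wcar (Dh a)"
      using sub by blast+
    from xy consider "x = wbot (Dh a) \<or> y = wbot (Dh a)" | "x = wtop (Dh a) \<or> y = wtop (Dh a)"
      | x' y' where "x = 0 # x'" "y = 0 # y'" "x' \<in> A" "y' \<in> A" "x' \<noteq> y'"
      by auto
    then show "wless (Dh a) x y \<or> wless (Dh a) y x"
    proof cases
      case 1
      then show ?thesis using wbot_least \<open>x \<in> wcar (Dh a)\<close> \<open>y \<in> wcar (Dh a)\<close> xy(3) by metis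
    next
      case 2
      then show ?thesis using wtop_greatest \<open>x \<in> wcar (Dh a)\<close> \<open>y \<in> wcar (Dh a)\<close> xy(3) by metis
    next
      case 3
      then show ?thesis using A(1) unfolding is_chain_in_def by simp
    qed
  qed
  moreover have "card ?C = height (Dh a)"
    using A finite_chain[OF finite_wcar A(1)] by (simp add: card_image image_iff)
  ultimately show ?case by blast
qed

lemma max_chain_wcar: "max_chain (wcar w) (wless w) = height w"
  unfolding max_chain_def
proof (rule Max_eqI)
  show "finite {card C |C. is_chain_in (wcar w) (wless w) C}"
    by (rule finite_subset[of _ "{..height w}"]) (auto dest: card_chain_le_height)
  show "height w \<in> {card C |C. is_chain_in (wcar w) (wless w) C}"
    using chain_of_height[of w] by (auto simp: eq_commute)
qed (auto dest: card_chain_le_height)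

section \<open>The Hasse diagram\<close>

lemma hasse_edges_subset: "hasse_edges V lt \<subseteq> V \<times> V"
  by (auto simp: hasse_edges_def)

lemma notin_hasse_edges: "\<not> lt u v \<Longrightarrow> (u, v) \<notin> hasse_edges V lt"
  by (simp add: hasse_edges_def)

lemma hasse_edges_embedding:
  assumes order: "\<And>x y. x \<in> A \<Longrightarrow> y \<in> A \<Longrightarrow> lt (f x) (f y) = lt' x y"
    and into: "f ` A \<subseteq> V"
    and convex: "\<And>x y z. x \<in> A \<Longrightarrow> y \<in> A \<Longrightarrow> z \<in> V \<Longrightarrow> lt (f x) z \<Longrightarrow> lt z (f y) \<Longrightarrow> z \<in> f ` A"
    and x: "x \<in> A" and y: "y \<in> A"
  shows "(f x, f y) \<in> hasse_edges V lt \<longleftrightarrow> (x, y) \<in> hasse_edges A lt'"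
proof -
  have "(\<exists>z\<in>V. lt (f x) z \<and> lt z (f y)) \<longleftrightarrow> (\<exists>z\<in>A. lt' x z \<and> lt' z y)"
  proof
    assume "\<exists>z\<in>V. lt (f x) z \<and> lt z (f y)"
    then obtain z where "z \<in> V" "lt (f x) z" "lt z (f y)" by blast
    moreover from this obtain z' where "z' \<in> A" "z = f z'" using convex[OF x y] by blast
    ultimately show "\<exists>z\<in>A. lt' x z \<and> lt' z y" using order x y by blast
  next
    assume "\<exists>z\<in>A. lt' x z \<and> lt' z y"
    then obtain z where "z \<in> A" "lt' x z" "lt' z y" by blast
    then show "\<exists>z\<in>V. lt (f x) z \<and> lt z (f y)" using order into x y by blast
  qed
  then show ?thesis
    using order[OF x y] into x y by (auto simp: hasse_edges_def)
qed

lemma subset_product_eqI: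
  assumes "A \<subseteq> V \<times> V" "B \<subseteq> V \<times> V" "\<And>u v. u \<in> V \<Longrightarrow> v \<in> V \<Longrightarrow> (u, v) \<in> A \<longleftrightarrow> (u, v) \<in> B"
  shows "A = B"
  using assms by auto

lemma map_prod_image_subset: "S \<subseteq> A \<times> A \<Longrightarrow> map_prod f f ` S \<subseteq> f ` A \<times> f ` A"
  by auto

lemma mem_map_prod_Cons:
  "(k # x, l # y) \<in> map_prod (Cons k') (Cons l') ` S \<longleftrightarrow> k = k' \<and> l = l' \<and> (x, y) \<in> S"
  by auto

lemma card_map_prod_Cons: "card (map_prod (Cons k) (Cons k) ` S) = card S"
  by (rule card_image) (auto simp: inj_on_def)

lemma rtrancl_sym_map:
  assumes "(x, y) \<in> (E \<union> E\<inverse>)\<^sup>*" and "\<And>u v. (u, v) \<in> E \<Longrightarrow> (f u, f v) \<in> E'"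
  shows "(f x, f y) \<in> (E' \<union> E'\<inverse>)\<^sup>*"
  using assms(1)
proof (induction rule: rtrancl_induct)
  case (step y z)
  then have "(f y, f z) \<in> E' \<union> E'\<inverse>" using assms(2) by auto
  with step.IH show ?case by (rule rtrancl_into_rtrancl)
qed simp

abbreviation whasse :: "wword \<Rightarrow> (nat list \<times> nat list) set" where
  "whasse w \<equiv> hasse_edges (wcar w) (wless w)"

lemma wcar_Mu_cases:
  assumes "z \<in> wcar (Mu a b)"
  obtains z' where "z = 0 # z'" "z' \<in> wcar a" | z' where "z = 1 # z'" "z' \<in> wcar b"
  using assms by auto

lemma wcar_Dh_cases:
  assumes "z \<in> wcar (Dh a)"
  obtains "z = [2]" | "z = [3]" | "z = [4]" | z' where "z = 0 # z'" "z' \<in> wcar a"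
  using assms by auto

lemma whasse_Mu_left:
  assumes "x \<in> wcar a" "y \<in> wcar a"
  shows "(0 # x, 0 # y) \<in> whasse (Mu a b) \<longleftrightarrow> (x, y) \<in> whasse a"
proof (rule hasse_edges_embedding[OF _ _ _ assms])
  show "z \<in> Cons 0 ` wcar a"
    if "z \<in> wcar (Mu a b)" "wless (Mu a b) (0 # u) z" "wless (Mu a b) z (0 # v)" for u v z
    using that(1) by (cases rule: wcar_Mu_cases) (use that in simp_all)
qed auto

lemma whasse_Mu_right:
  assumes "x \<in> wcar b" "y \<in> wcar b"
  shows "(1 # x, 1 # y) \<in> whasse (Mu a b) \<longleftrightarrow> (x, y) \<in> whasse b"
proof (rule hasse_edges_embedding[OF _ _ _ assms])
  show "z \<in> Cons 1 ` wcar b"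
    if "z \<in> wcar (Mu a b)" "wless (Mu a b) (1 # u) z" "wless (Mu a b) z (1 # v)" for u v z
    using that(1) by (cases rule: wcar_Mu_cases) (use that in simp_all)
qed auto

lemma whasse_Mu_cross:
  assumes x: "x \<in> wcar a" and y: "y \<in> wcar b"
  shows "(0 # x, 1 # y) \<in> whasse (Mu a b) \<longleftrightarrow> x = wtop a \<and> y = wbot b"
proof
  assume "(0 # x, 1 # y) \<in> whasse (Mu a b)"
  then have between: "\<not> (wless (Mu a b) (0 # x) z \<and> wless (Mu a b) z (1 # y))"
    if "z \<in> wcar (Mu a b)" for z
    using that unfolding hasse_edges_def by blast
  show "x = wtop a \<and> y = wbot b"
  proof
    show "x = wtop a"
    proof (rule ccontr)
      assume "x \<noteq> wtop a"
      with x have "wless a x (wtop a)" by (rule wtop_greatest)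
      then show False using between[of "0 # wtop a"] wtop_in_wcar[of a] x y by simp
    qed
    show "y = wbot b"
    proof (rule ccontr)
      assume "y \<noteq> wbot b"
      with y have "wless b (wbot b) y" by (rule wbot_least)
      then show False using between[of "1 # wbot b"] wbot_in_wcar[of b] x y by simp
    qed
  qed
next
  assume ends: "x = wtop a \<and> y = wbot b"
  have "\<not> (wless (Mu a b) (0 # x) z \<and> wless (Mu a b) z (1 # y))" if "z \<in> wcar (Mu a b)" for z
    using that by (cases rule: wcar_Mu_cases) (simp_all add: ends not_wtop_wless not_wless_wbot)
  moreover have "0 # x \<in> wcar (Mu a b)" "1 # y \<in> wcar (Mu a b)" "wless (Mu a b) (0 # x) (1 # y)"
    using x y by simp_all
  ultimately show "(0 # x, 1 # y) \<in> whasse (Mu a b)"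
    unfolding hasse_edges_def by blast
qed

lemma whasse_Mu:
  "whasse (Mu a b) = map_prod (Cons 0) (Cons 0) ` whasse a \<union> map_prod (Cons 1) (Cons 1) ` whasse b
    \<union> {(0 # wtop a, 1 # wbot b)}" (is "_ = ?E")
proof (rule subset_product_eqI[OF hasse_edges_subset])
  have "map_prod (Cons 0) (Cons 0) ` whasse a \<subseteq> Cons 0 ` wcar a \<times> Cons 0 ` wcar a"
    "map_prod (Cons 1) (Cons 1) ` whasse b \<subseteq> Cons 1 ` wcar b \<times> Cons 1 ` wcar b"
    by (intro map_prod_image_subset hasse_edges_subset)+
  moreover have "0 # wtop a \<in> Cons 0 ` wcar a" "1 # wbot b \<in> Cons 1 ` wcar b"
    by (simp_all add: wtop_in_wcar wbot_in_wcar)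
  ultimately show "?E \<subseteq> wcar (Mu a b) \<times> wcar (Mu a b)"
    unfolding wcar.simps by blast
  show "(u, v) \<in> whasse (Mu a b) \<longleftrightarrow> (u, v) \<in> ?E"
    if u: "u \<in> wcar (Mu a b)" and v: "v \<in> wcar (Mu a b)" for u v
    using u
    by (cases rule: wcar_Mu_cases; cases rule: wcar_Mu_cases[OF v])
      (simp only: whasse_Mu_left whasse_Mu_right whasse_Mu_cross;
        simp add: mem_map_prod_Cons notin_hasse_edges del: wcar.simps)+
qed

lemma whasse_Dh_inner:
  assumes "x \<in> wcar a" "y \<in> wcar a"
  shows "(0 # x, 0 # y) \<in> whasse (Dh a) \<longleftrightarrow> (x, y) \<in> whasse a"
proof (rule hasse_edges_embedding[OF _ _ _ assms])
  show "z \<in> Cons 0 ` wcar a"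
    if "z \<in> wcar (Dh a)" "wless (Dh a) (0 # u) z" "wless (Dh a) z (0 # v)" for u v z
    using that(1) by (cases rule: wcar_Dh_cases) (use that in simp_all)
qed auto

lemma whasse_Dh_bot:
  assumes y: "y \<in> wcar a"
  shows "([2], 0 # y) \<in> whasse (Dh a) \<longleftrightarrow> y = wbot a"
proof
  assume edge: "([2], 0 # y) \<in> whasse (Dh a)"
  show "y = wbot a"
  proof (rule ccontr)
    assume "y \<noteq> wbot a"
    with y have "wless a (wbot a) y" by (rule wbot_least)
    moreover have "0 # wbot a \<in> wcar (Dh a)" "wless (Dh a) [2] (0 # wbot a)"
      using wbot_in_wcar[of a] by simp_all
    ultimately show False using edge unfolding hasse_edges_def by auto
  qed
next
  assume bot: "y = wbot a"
  have "\<not> (wless (Dh a) [2] z \<and> wless (Dh a) z (0 # y))" if "z \<in> wcar (Dh a)" for z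
    using that by (cases rule: wcar_Dh_cases) (simp_all add: bot not_wless_wbot)
  moreover have "[2] \<in> wcar (Dh a)" "0 # y \<in> wcar (Dh a)" "wless (Dh a) [2] (0 # y)"
    using y by simp_all
  ultimately show "([2], 0 # y) \<in> whasse (Dh a)"
    unfolding hasse_edges_def by blast
qed

lemma whasse_Dh_top:
  assumes x: "x \<in> wcar a"
  shows "(0 # x, [3]) \<in> whasse (Dh a) \<longleftrightarrow> x = wtop a"
proof
  assume edge: "(0 # x, [3]) \<in> whasse (Dh a)"
  show "x = wtop a"
  proof (rule ccontr)
    assume "x \<noteq> wtop a"
    with x have "wless a x (wtop a)" by (rule wtop_greatest)
    moreover have "0 # wtop a \<in> wcar (Dh a)" "wless (Dh a) (0 # wtop a) [3]"
      using wtop_in_wcar[of a] by simp_all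
    ultimately show False using edge unfolding hasse_edges_def by auto
  qed
next
  assume top: "x = wtop a"
  have "\<not> (wless (Dh a) (0 # x) z \<and> wless (Dh a) z [3])" if "z \<in> wcar (Dh a)" for z
    using that by (cases rule: wcar_Dh_cases) (simp_all add: top not_wtop_wless)
  moreover have "[3] \<in> wcar (Dh a)" "0 # x \<in> wcar (Dh a)" "wless (Dh a) (0 # x) [3]"
    using x by simp_all
  ultimately show "(0 # x, [3]) \<in> whasse (Dh a)"
    unfolding hasse_edges_def by blast
qed

lemma whasse_Dh_middle:
  "([2], [4]) \<in> whasse (Dh a)" "([4], [3]) \<in> whasse (Dh a)" "([2], [3]) \<notin> whasse (Dh a)"
  by (auto simp: hasse_edges_def)

lemma mem_whasse_Dh_iff:
  assumes u: "u \<in> wcar (Dh a)" and v: "v \<in> wcar (Dh a)"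
  shows "(u, v) \<in> whasse (Dh a) \<longleftrightarrow> (u, v) \<in> map_prod (Cons 0) (Cons 0) ` whasse a
    \<union> {([2], 0 # wbot a), (0 # wtop a, [3]), ([2], [4]), ([4], [3])}"
  using u
proof (cases rule: wcar_Dh_cases)
  case 1
  from v show ?thesis
  proof (cases rule: wcar_Dh_cases)
    case (4 y) then show ?thesis using \<open>u = [2]\<close> whasse_Dh_bot by (simp add: mem_map_prod_Cons del: wcar.simps)
  qed (use \<open>u = [2]\<close> whasse_Dh_middle in \<open>simp_all add: mem_map_prod_Cons notin_hasse_edges del: wcar.simps\<close>)
next
  case 2
  from v show ?thesis
    by (cases rule: wcar_Dh_cases)
      (use \<open>u = [3]\<close> in \<open>simp_all add: mem_map_prod_Cons notin_hasse_edges del: wcar.simps\<close>)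
next
  case 3
  from v show ?thesis
    by (cases rule: wcar_Dh_cases)
      (use \<open>u = [4]\<close> whasse_Dh_middle in \<open>simp_all add: mem_map_prod_Cons notin_hasse_edges del: wcar.simps\<close>)
next
  case (4 x)
  from v show ?thesis
  proof (cases rule: wcar_Dh_cases)
    case 2 then show ?thesis using 4 whasse_Dh_top by (simp add: mem_map_prod_Cons del: wcar.simps)
  next
    case (4 y) then show ?thesis using \<open>u = 0 # x\<close> \<open>x \<in> wcar a\<close> whasse_Dh_inner
      by (simp add: mem_map_prod_Cons del: wcar.simps)
  qed (use 4 in \<open>simp_all add: mem_map_prod_Cons notin_hasse_edges del: wcar.simps\<close>)
qed

lemma whasse_Dh:
  "whasse (Dh a) = map_prod (Cons 0) (Cons 0) ` whasse a
    \<union> {([2], 0 # wbot a), (0 # wtop a, [3]), ([2], [4]), ([4], [3])}"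
proof (rule subset_product_eqI[OF hasse_edges_subset _ mem_whasse_Dh_iff])
  have "map_prod (Cons 0) (Cons 0) ` whasse a \<subseteq> Cons 0 ` wcar a \<times> Cons 0 ` wcar a"
    by (intro map_prod_image_subset hasse_edges_subset)
  moreover have "0 # wtop a \<in> Cons 0 ` wcar a" "0 # wbot a \<in> Cons 0 ` wcar a"
    by (simp_all add: wtop_in_wcar wbot_in_wcar)
  ultimately show "map_prod (Cons 0) (Cons 0) ` whasse a
      \<union> {([2], 0 # wbot a), (0 # wtop a, [3]), ([2], [4]), ([4], [3])} \<subseteq> wcar (Dh a) \<times> wcar (Dh a)"
    unfolding wcar.simps by blast
qed

lemma finite_whasse: "finite (whasse w)"
  using hasse_edges_subset by (rule finite_subset) (simp add: finite_wcar)

lemma card_whasse: "card (whasse w) + 1 = card (wcar w) + count_D w"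
proof (induction w)
  case One
  then show ?case by (simp add: hasse_edges_def)
next
  case (Mu a b)
  let ?A = "map_prod (Cons 0) (Cons 0) ` whasse a" and ?B = "map_prod (Cons 1) (Cons 1) ` whasse b"
  have "card (whasse (Mu a b)) = card (?A \<union> ?B) + 1"
    unfolding whasse_Mu by (subst card_Un_disjoint) (auto simp: finite_whasse)
  also have "card (?A \<union> ?B) = card (whasse a) + card (whasse b)"
    by (subst card_Un_disjoint) (auto simp: finite_whasse card_map_prod_Cons)
  finally show ?case
    using Mu.IH by (simp add: card_wcar_Mu del: wcar.simps)
next
  case (Dh a)
  have "card (whasse (Dh a)) = card (whasse a) + 4"
    unfolding whasse_Dh by (subst card_Un_disjoint) (auto simp: finite_whasse card_map_prod_Cons)
  then show ?case
    using Dh.IH by (simp only: count_D.simps card_wcar_Dh)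
qed

lemma wbot_connected: "x \<in> wcar w \<Longrightarrow> (wbot w, x) \<in> (whasse w \<union> (whasse w)\<inverse>)\<^sup>*"
proof (induction w arbitrary: x)
  case (Mu a b)
  let ?R = "(whasse (Mu a b) \<union> (whasse (Mu a b))\<inverse>)\<^sup>*"
  have lift: "(k # u, k # v) \<in> ?R" if "(u, v) \<in> (whasse c \<union> (whasse c)\<inverse>)\<^sup>*"
    and "map_prod (Cons k) (Cons k) ` whasse c \<subseteq> whasse (Mu a b)" for k u v c
    using rtrancl_sym_map[OF that(1), of "Cons k"] that(2) by (auto intro: map_prod_imageI)
  have sub0: "map_prod (Cons 0) (Cons 0) ` whasse a \<subseteq> whasse (Mu a b)"
    and sub1: "map_prod (Cons 1) (Cons 1) ` whasse b \<subseteq> whasse (Mu a b)"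
    and cross: "(0 # wtop a, 1 # wbot b) \<in> whasse (Mu a b)"
    by (subst whasse_Mu; blast)+
  from Mu.prems show ?case
  proof (cases rule: wcar_Mu_cases)
    case (1 x')
    then show ?thesis using lift[OF Mu.IH(1)[OF \<open>x' \<in> wcar a\<close>] sub0] by (simp only: wbot.simps)
  next
    case (2 x')
    have "(wbot (Mu a b), 0 # wtop a) \<in> ?R"
      using lift[OF Mu.IH(1)[OF wtop_in_wcar] sub0] by (simp only: wbot.simps)
    also have "(0 # wtop a, 1 # wbot b) \<in> ?R"
      using cross by blast
    also have "(1 # wbot b, x) \<in> ?R"
      using lift[OF Mu.IH(2)[OF \<open>x' \<in> wcar b\<close>] sub1] by (simp only: 2)
    finally show ?thesis .
  qed
next
  case (Dh a)
  let ?R = "(whasse (Dh a) \<union> (whasse (Dh a))\<inverse>)\<^sup>*"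
  have sub0: "map_prod (Cons 0) (Cons 0) ` whasse a \<subseteq> whasse (Dh a)"
    and edges: "([2], 0 # wbot a) \<in> whasse (Dh a)" "([2], [4]) \<in> whasse (Dh a)"
      "([4], [3]) \<in> whasse (Dh a)"
    by (subst whasse_Dh; blast)+
  from Dh.prems show ?case
  proof (cases rule: wcar_Dh_cases)
    case 2
    have "([2], [4]) \<in> ?R" "([4], [3]) \<in> ?R" using edges by blast+
    then show ?thesis unfolding 2 wbot.simps by (rule rtrancl_trans)
  next
    case (4 x')
    have "([2], 0 # wbot a) \<in> ?R" using edges by blast
    also have "(0 # wbot a, 0 # x') \<in> ?R"
      using rtrancl_sym_map[OF Dh.IH[OF 4(2)], of "Cons 0"] sub0 by (auto intro: map_prod_imageI)
    finally show ?thesis unfolding 4 wbot.simps .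
  qed (use edges in \<open>auto simp del: wcar.simps wless.simps\<close>)
qed simp

lemma components_whasse: "components (wcar w) (whasse w) = {wcar w}"
proof -
  let ?R = "(whasse w \<union> (whasse w)\<inverse>)\<^sup>*"
  have "sym ?R" by (intro sym_rtrancl sym_Un_converse)
  then have "(x, y) \<in> ?R" if "x \<in> wcar w" "y \<in> wcar w" for x y
    using wbot_connected[OF that(1)] wbot_connected[OF that(2)] by (meson rtrancl_trans symD)
  then have "{(x, y). x \<in> wcar w \<and> y \<in> wcar w \<and> (x, y) \<in> ?R} = wcar w \<times> wcar w"
    by auto
  then show ?thesis
    unfolding components_def using wcar_nonempty[of w] by (simp add: quotient_def) blast
qed

lemma betti1_hasse_wcar: "betti1_hasse (wcar w) (wless w) = int (count_D w)"
  using card_whasse[of w] by (simp add: betti1_hasse_def components_whasse card_wcar)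

lemma Zser_wcar_expansion:
  "Zser (wcar w) (wless w) = (\<Sum>j=height w..card (wcar w). of_nat (coeff (zeta_poly w) j) * zeta j)"
  unfolding Zser_wcar zeta_sum_def degree_zeta_poly
  by (rule sum.mono_neutral_right) (auto simp: coeff_zeta_poly_eq_0_iff)

lemma zeta_poly_alternating_sum:
  "(\<Sum>u=height w..card (wcar w). (-1::int) ^ (card (wcar w) - u) * int (coeff (zeta_poly w) u)) = 1"
proof -
  let ?p = "zeta_poly w"
  have "(\<Sum>u=height w..card (wcar w). (-1::int) ^ (card (wcar w) - u) * int (coeff ?p u))
      = (\<Sum>u\<le>degree ?p. (-1) ^ (degree ?p - u) * int (coeff ?p u))"
    unfolding degree_zeta_poly
    by (rule sum.mono_neutral_left) (auto simp: coeff_zeta_poly_eq_0_iff)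
  also have "\<dots> = (-1) ^ degree ?p * poly (map_poly of_nat ?p) (-1)"
    by (rule sum_alternating_coeff)
  also have "\<dots> = 1"
    by (simp add: poly_zeta_poly_minus_one degree_zeta_poly flip: power_mult_distrib)
  finally show ?thesis .
qed

theorem proposition3p1:
  fixes w :: wword
  defines "V \<equiv> wcar w" and "lt \<equiv> wless w"
      and "m \<equiv> count_mu w" and "d \<equiv> count_D w"
  shows "\<exists>i k (a :: nat \<Rightarrow> nat).
     1 \<le> i \<and> i \<le> k \<and> a i \<noteq> 0 \<and> a k \<noteq> 0 \<and>
     Zser V lt = (\<Sum>j=i..k. of_nat (a j) * zeta j) \<and>
     (\<forall>i' k' (a' :: nat \<Rightarrow> nat).
        1 \<le> i' \<and> i' \<le> k' \<and> a' i' \<noteq> 0 \<and> a' k' \<noteq> 0 \<and>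
        Zser V lt = (\<Sum>j=i'..k'. of_nat (a' j) * zeta j)
        \<longrightarrow> i' = i \<and> k' = k \<and> (\<forall>j\<in>{i..k}. a' j = a j)) \<and>
     i = max_chain V lt \<and>
     k = card V \<and>
     k - i = d \<and> int d = betti1_hasse V lt \<and>
     int m = int i - 2 * int d - 1 \<and> leaves w = m + 1 \<and>
     (\<Sum>u=i..k. (-1::int) ^ (k - u) * int (a u)) = 1"
proof -
  let ?i = "height w" and ?k = "card (wcar w)" and ?a = "coeff (zeta_poly w)"
  have range: "1 \<le> ?i" "?i \<le> ?k"
    using height_pos[of w] by (simp_all add: card_wcar)
  then have ends: "?a ?i \<noteq> 0" "?a ?k \<noteq> 0"
    by (simp_all add: coeff_zeta_poly_eq_0_iff)
  have Z: "Zser V lt = (\<Sum>j=?i..?k. of_nat (?a j) * zeta j)"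
    unfolding V_def lt_def by (rule Zser_wcar_expansion)
  have "\<forall>i' k' (a' :: nat \<Rightarrow> nat).
      1 \<le> i' \<and> i' \<le> k' \<and> a' i' \<noteq> 0 \<and> a' k' \<noteq> 0 \<and>
      Zser V lt = (\<Sum>j=i'..k'. of_nat (a' j) * zeta j)
      \<longrightarrow> i' = ?i \<and> k' = ?k \<and> (\<forall>j\<in>{?i..?k}. a' j = ?a j)"
  proof (intro allI impI)
    fix i' k' and a' :: "nat \<Rightarrow> nat"
    assume a': "1 \<le> i' \<and> i' \<le> k' \<and> a' i' \<noteq> 0 \<and> a' k' \<noteq> 0 \<and>
      Zser V lt = (\<Sum>j=i'..k'. of_nat (a' j) * zeta j)"
    then have "(\<Sum>j=?i..?k. of_nat (?a j) * zeta j) = (\<Sum>j=i'..k'. of_nat (a' j) * zeta j)"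
      using Z by argo
    then show "i' = ?i \<and> k' = ?k \<and> (\<forall>j\<in>{?i..?k}. a' j = ?a j)"
      by (rule zeta_expansion_unique) (use a' range ends in simp_all)
  qed
  have "?i = max_chain V lt" "int d = betti1_hasse V lt"
    unfolding V_def lt_def d_def by (simp_all add: max_chain_wcar betti1_hasse_wcar)
  have "?k = card V" "?k - ?i = d" "int m = int ?i - 2 * int d - 1" "leaves w = m + 1"
    unfolding V_def m_def d_def by (simp_all add: card_wcar height_eq leaves_eq)
  note zeta_poly_alternating_sum[of w]
  show ?thesis
    by (intro exI[of _ ?i] exI[of _ ?k] exI[of _ ?a] conjI; fact)
qed

end
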